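(* Let $n,n_1,n_2$ be positive integers with $n_1,n_2\le 10^{-6}n$. Let $M$ be an $n\times n$ random matrix whose entries are independent, each with mean $0$, variance at most $\sigma^2$ where $\sigma\ge 20/\sqrt n$, and each almost surely in $[-1,1]$. Then with probability at least $1-e^{-8(n_1+n_2)\log(n/n_1+n/n_2)}$, for every $I,J\subseteq[n]$ with $|I|=n_1$, $|J|=n_2$, we have $\big|\sum_{i\in I,j\in J}M_{ij}\big|\le (n_1+n_2)\sigma\sqrt n$. *)

theory Defs
  imports "HOL-Probability.Probability"
begin

end

theory Submission
  imports Defs
begin

text \<open>
  For fixed I and J the block sum is a sum of n1 n2 independent centred variables bounded by 1
  with variance at most \<sigma>^2. Bennett's bound E exp(l Y) \<le> exp(\<sigma>^2 (e^l - 1 - l)) and the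
  Chernoff inequality with l = 10 L / (\<sigma> sqrt n), where L = ln (n/n1 + n/n2), show that the
  block sum exceeds (n1 + n2) \<sigma> sqrt n in absolute value with probability at most
  2 exp ((2/5 - 10 L)(n1 + n2)). There are at most (e n/n1)^n1 (e n/n2)^n2 \<le> exp ((n1 + n2)(1 + L))
  pairs (I, J), and since L \<ge> 3 the union bound absorbs this count.
\<close>

lemma exp_mult_le_quadratic:
  fixes l x :: real
  assumes "l \<ge> 0" and "\<bar>x\<bar> \<le> 1"
  shows "exp (l * x) \<le> 1 + l * x + x\<^sup>2 * (exp l - 1 - l)"
proof -
  have exp_tail_sums: "(\<lambda>i. y ^ (i + 2) / fact (i + 2)) sums (exp y - 1 - y)" for y :: real
  proof -
    have "(\<lambda>i. y ^ i / fact i) sums ((exp y - 1 - y) + (\<Sum>i<2. y ^ i / fact i))"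
      using exp_converges[of y] by (simp add: numeral_2_eq_2 divide_inverse mult.commute)
    then show ?thesis
      by (subst sums_iff_shift)
  qed
  have "(l * x) ^ (i + 2) / fact (i + 2) \<le> x\<^sup>2 * (l ^ (i + 2) / fact (i + 2))" for i
  proof -
    have "x ^ (i + 2) \<le> \<bar>x\<bar> ^ i * x\<^sup>2"
      by (metis abs_ge_self power_abs power_add abs_power2)
    also have "\<dots> \<le> x\<^sup>2"
      using assms(2) by (simp add: mult_left_le_one_le power_le_one)
    finally have "x ^ (i + 2) \<le> x\<^sup>2" .
    then have "l ^ (i + 2) * x ^ (i + 2) \<le> l ^ (i + 2) * x\<^sup>2"
      using assms(1) by (intro mult_left_mono) auto
    then have "(l * x) ^ (i + 2) \<le> x\<^sup>2 * l ^ (i + 2)"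
      by (metis power_mult_distrib mult.commute)
    then show ?thesis
      by (metis divide_right_mono fact_ge_zero times_divide_eq_right)
  qed
  from sums_le[OF this exp_tail_sums sums_mult[OF exp_tail_sums, of "x\<^sup>2"]]
  show ?thesis by simp
qed

lemma exp_mult_minus_linear_le:
  fixes l x :: real
  assumes "l \<ge> 0" and "\<bar>x\<bar> \<le> 1"
  shows "exp (l * x) - 1 - l * x \<le> x\<^sup>2 * exp l"
proof -
  have "exp l - 1 - l \<le> exp l"
    using assms(1) by simp
  then have "x\<^sup>2 * (exp l - 1 - l) \<le> x\<^sup>2 * exp l"
    by (simp add: mult_left_mono)
  with exp_mult_le_quadratic[OF assms] show ?thesis
    by simp
qed

lemma power_div_fact_le_exp:
  fixes x :: real
  assumes "x \<ge> 0"
  shows "x ^ k / fact k \<le> exp x"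
proof -
  have exp_sums: "(\<lambda>i. x ^ i / fact i) sums exp x"
    using exp_converges[of x] by (simp add: divide_inverse mult.commute)
  have "(\<Sum>i\<in>{k}. x ^ i / fact i) \<le> (\<Sum>i. x ^ i / fact i)"
    by (rule sum_le_suminf) (use exp_sums assms in \<open>auto simp: sums_iff\<close>)
  then show ?thesis
    using exp_sums by (simp add: sums_iff)
qed

lemma binomial_le_exp_mult_pow:
  assumes "k > 0"
  shows "real (n choose k) \<le> (exp 1 * real n / real k) ^ k"
proof -
  have "real (n choose k) * fact k \<le> real n ^ k"
    using binomial_fact_pow[of n k] by (metis of_nat_fact of_nat_le_iff of_nat_mult of_nat_power)
  then have "real (n choose k) \<le> real n ^ k / fact k"
    by (simp add: field_simps)
  also have "\<dots> = (real n / real k) ^ k * (real k ^ k / fact k)"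
    using assms by (simp add: field_simps power_divide)
  also have "\<dots> \<le> (real n / real k) ^ k * exp (real k)"
    by (intro mult_left_mono power_div_fact_le_exp) auto
  also have "exp (real k) = exp 1 ^ k"
    by (simp flip: exp_of_nat_mult)
  also have "(real n / real k) ^ k * exp 1 ^ k = (exp 1 * real n / real k) ^ k"
    by (simp add: power_mult_distrib[symmetric] mult_ac)
  finally show ?thesis .
qed

lemma binomial_mult_binomial_le:
  assumes "a > 0" and "b > 0" and "n > 0"
  shows "real (n choose a) * real (n choose b)
           \<le> exp (real (a + b) * (1 + ln (real n / real a + real n / real b)))"
proof -
  define R where "R = real n / real a + real n / real b"
  have "R > 0"
    using assms unfolding R_def by (intro add_pos_pos divide_pos_pos) auto
  have "real (n choose k) \<le> (exp 1 * R) ^ k" if "k \<in> {a, b}" for k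
  proof -
    have "real (n choose k) \<le> (exp 1 * real n / real k) ^ k"
      using that assms by (intro binomial_le_exp_mult_pow) auto
    also have "\<dots> \<le> (exp 1 * R) ^ k"
    proof (intro power_mono)
      have "real n / real k \<le> R"
        using that by (auto simp: R_def)
      then show "exp 1 * real n / real k \<le> exp 1 * R"
        by (metis exp_ge_zero mult_left_mono times_divide_eq_right)
    qed simp
    finally show ?thesis .
  qed
  then have "real (n choose a) * real (n choose b) \<le> (exp 1 * R) ^ a * (exp 1 * R) ^ b"
    using \<open>R > 0\<close> by (intro mult_mono) auto
  also have "\<dots> = exp (1 + ln R) ^ (a + b)"
    using \<open>R > 0\<close> by (simp add: exp_add power_add)
  also have "\<dots> = exp (real (a + b) * (1 + ln R))"
    by (simp flip: exp_of_nat_mult)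
  finally show ?thesis
    by (simp add: R_def)
qed

context prob_space
begin

lemma bennett_nn_integral_exp_le:
  assumes [measurable]: "Y \<in> borel_measurable M"
    and bounded: "AE x in M. \<bar>Y x\<bar> \<le> 1"
    and centered: "expectation Y = 0"
    and "variance Y \<le> v"
    and "l \<ge> 0"
  shows "(\<integral>\<^sup>+x. ennreal (exp (l * Y x)) \<partial>M) \<le> ennreal (exp (v * (exp l - 1 - l)))"
proof -
  define g where "g = exp l - 1 - l"
  have "g \<ge> 0"
    using exp_ge_add_one_self[of l] unfolding g_def by linarith
  have int_Y: "integrable M Y"
    by (rule integrable_const_bound[where B = 1]) (use bounded in auto)
  have int_Y2: "integrable M (\<lambda>x. (Y x)\<^sup>2)"
    by (rule integrable_const_bound[where B = 1])
       (use bounded in \<open>eventually_elim, auto simp: abs_square_le_1\<close>)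
  have int_exp: "integrable M (\<lambda>x. exp (l * Y x))"
  proof (rule integrable_const_bound[where B = "exp l"])
    show "AE x in M. norm (exp (l * Y x)) \<le> exp l"
      using bounded by eventually_elim (use \<open>l \<ge> 0\<close> in \<open>auto intro: mult_left_le simp: abs_le_iff\<close>)
  qed auto
  have "(\<integral>\<^sup>+x. ennreal (exp (l * Y x)) \<partial>M) = ennreal (expectation (\<lambda>x. exp (l * Y x)))"
    by (rule nn_integral_eq_integral[OF int_exp]) auto
  also have "expectation (\<lambda>x. exp (l * Y x)) \<le> expectation (\<lambda>x. 1 + l * Y x + (Y x)\<^sup>2 * g)"
    using bounded int_exp int_Y int_Y2
    by (intro integral_mono_AE) (auto elim!: eventually_mono simp: g_def exp_mult_le_quadratic \<open>l \<ge> 0\<close>)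
  also have "\<dots> = 1 + variance Y * g"
    using int_Y int_Y2 centered by (simp add: prob_space)
  also have "\<dots> \<le> 1 + v * g"
    using \<open>variance Y \<le> v\<close> \<open>g \<ge> 0\<close> by (simp add: mult_right_mono)
  also have "\<dots> \<le> exp (v * g)"
    by (rule exp_ge_add_one_self)
  finally show ?thesis
    by (simp add: g_def ennreal_leI)
qed

lemma bennett_tail:
  assumes "finite K" and indep: "indep_vars (\<lambda>_. borel) Y K"
    and bounded: "\<And>k. k \<in> K \<Longrightarrow> AE x in M. \<bar>Y k x\<bar> \<le> 1"
    and centered: "\<And>k. k \<in> K \<Longrightarrow> expectation (Y k) = 0"
    and variance: "\<And>k. k \<in> K \<Longrightarrow> variance (Y k) \<le> v"
    and "l > 0"
  shows "prob {x \<in> space M. t \<le> (\<Sum>k\<in>K. Y k x)} \<le> exp (- l * t + real (card K) * v * (exp l - 1 - l))"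
proof -
  have [measurable]: "\<And>k. k \<in> K \<Longrightarrow> Y k \<in> borel_measurable M"
    using indep unfolding indep_vars_def by blast
  have "ennreal (prob {x \<in> space M. t \<le> (\<Sum>k\<in>K. Y k x)}) = emeasure M {x \<in> space M. t \<le> (\<Sum>k\<in>K. Y k x)}"
    by (simp add: emeasure_eq_measure)
  also have "\<dots> \<le> ennreal (exp (- l * t)) * (\<integral>\<^sup>+x\<in>space M. exp (l * (\<Sum>k\<in>K. Y k x)) \<partial>M)"
    by (intro Chernoff_ineq_nn_integral_ge) (use \<open>l > 0\<close> in auto)
  also have "(\<integral>\<^sup>+x\<in>space M. exp (l * (\<Sum>k\<in>K. Y k x)) \<partial>M)
               = (\<integral>\<^sup>+x. (\<Prod>k\<in>K. ennreal (exp (l * Y k x))) \<partial>M)"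
    by (intro nn_integral_cong) (simp_all add: sum_distrib_left exp_sum \<open>finite K\<close> prod_ennreal)
  also have "\<dots> = (\<Prod>k\<in>K. \<integral>\<^sup>+x. ennreal (exp (l * Y k x)) \<partial>M)"
    by (intro indep_vars_nn_integral \<open>finite K\<close> indep_vars_compose2[OF indep]) auto
  also have "\<dots> \<le> (\<Prod>k\<in>K. ennreal (exp (v * (exp l - 1 - l))))"
    using bounded centered variance \<open>l > 0\<close>
    by (intro prod_mono_ennreal bennett_nn_integral_exp_le) auto
  finally have "ennreal (prob {x \<in> space M. t \<le> (\<Sum>k\<in>K. Y k x)})
                  \<le> ennreal (exp (- l * t)) * (\<Prod>k\<in>K. ennreal (exp (v * (exp l - 1 - l))))"
    by (simp add: mult_left_mono)
  also have "\<dots> = ennreal (exp (- l * t) * exp (v * (exp l - 1 - l)) ^ card K)"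
    by (simp add: ennreal_power ennreal_mult)
  also have "exp (- l * t) * exp (v * (exp l - 1 - l)) ^ card K
               = exp (- l * t + real (card K) * v * (exp l - 1 - l))"
    by (simp add: exp_add exp_diff exp_minus divide_inverse mult_ac flip: exp_of_nat_mult)
  finally show ?thesis
    by (simp add: ennreal_le_iff)
qed

lemma bennett_tail_abs:
  assumes "finite K" and indep: "indep_vars (\<lambda>_. borel) Y K"
    and bounded: "\<And>k. k \<in> K \<Longrightarrow> AE x in M. \<bar>Y k x\<bar> \<le> 1"
    and centered: "\<And>k. k \<in> K \<Longrightarrow> expectation (Y k) = 0"
    and variance: "\<And>k. k \<in> K \<Longrightarrow> variance (Y k) \<le> v"
    and "l > 0"
  shows "prob {x \<in> space M. t \<le> \<bar>\<Sum>k\<in>K. Y k x\<bar>} \<le> 2 * exp (- l * t + real (card K) * v * (exp l - 1 - l))"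
proof -
  have [measurable]: "\<And>k. k \<in> K \<Longrightarrow> Y k \<in> borel_measurable M"
    using indep unfolding indep_vars_def by blast
  have indep_neg: "indep_vars (\<lambda>_. borel) (\<lambda>k x. - Y k x) K"
    using indep_vars_compose2[OF indep, of "\<lambda>_. uminus"] by simp
  have variance_neg: "variance (\<lambda>x. - Y k x) = variance (Y k)" for k
  proof -
    have "(- Y k x - expectation (\<lambda>x. - Y k x))\<^sup>2 = (Y k x - expectation (Y k))\<^sup>2" for x
      by (simp add: power2_eq_square algebra_simps)
    then show ?thesis
      by simp
  qed
  have "{x \<in> space M. t \<le> \<bar>\<Sum>k\<in>K. Y k x\<bar>}
          = {x \<in> space M. t \<le> (\<Sum>k\<in>K. Y k x)} \<union> {x \<in> space M. t \<le> (\<Sum>k\<in>K. - Y k x)}"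
    by (auto simp: sum_negf abs_le_iff)
  also have "prob \<dots> \<le> prob {x \<in> space M. t \<le> (\<Sum>k\<in>K. Y k x)} + prob {x \<in> space M. t \<le> (\<Sum>k\<in>K. - Y k x)}"
    by (intro measure_Un_le) measurable
  also have "\<dots> \<le> 2 * exp (- l * t + real (card K) * v * (exp l - 1 - l))"
  proof -
    have "prob {x \<in> space M. t \<le> (\<Sum>k\<in>K. - Y k x)} \<le> exp (- l * t + real (card K) * v * (exp l - 1 - l))"
    proof (rule bennett_tail[OF \<open>finite K\<close> indep_neg _ _ _ \<open>l > 0\<close>])
      fix k
      assume "k \<in> K"
      then show "AE x in M. \<bar>- Y k x\<bar> \<le> 1" and "expectation (\<lambda>x. - Y k x) = 0"
        using bounded centered by simp_all
      show "variance (\<lambda>x. - Y k x) \<le> v"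
        using variance \<open>k \<in> K\<close> by (simp only: variance_neg)
    qed
    then show ?thesis
      using bennett_tail[OF \<open>finite K\<close> indep bounded centered variance \<open>l > 0\<close>, where t = t] by linarith
  qed
  finally show ?thesis .
qed

lemma bennett_tail_abs_block_sum:
  fixes X :: "'i \<Rightarrow> 'j \<Rightarrow> 'a \<Rightarrow> real"
  assumes indep: "indep_vars (\<lambda>_. borel) (\<lambda>(i, j). X i j) (U \<times> V)"
    and "I \<subseteq> U" and "J \<subseteq> V" and "finite I" and "finite J"
    and bounded: "\<And>i j. i \<in> U \<Longrightarrow> j \<in> V \<Longrightarrow> AE x in M. \<bar>X i j x\<bar> \<le> 1"
    and centered: "\<And>i j. i \<in> U \<Longrightarrow> j \<in> V \<Longrightarrow> expectation (X i j) = 0"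
    and variance: "\<And>i j. i \<in> U \<Longrightarrow> j \<in> V \<Longrightarrow> variance (X i j) \<le> v"
    and "l > 0"
  shows "prob {x \<in> space M. t \<le> \<bar>\<Sum>i\<in>I. \<Sum>j\<in>J. X i j x\<bar>}
           \<le> 2 * exp (- l * t + real (card I * card J) * v * (exp l - 1 - l))"
proof -
  have "(\<Sum>i\<in>I. \<Sum>j\<in>J. X i j x) = (\<Sum>k\<in>I \<times> J. case_prod X k x)" for x
    by (simp add: sum.cartesian_product case_prod_beta')
  moreover have "prob {x \<in> space M. t \<le> \<bar>\<Sum>k\<in>I \<times> J. case_prod X k x\<bar>}
                   \<le> 2 * exp (- l * t + real (card (I \<times> J)) * v * (exp l - 1 - l))"
  proof (rule bennett_tail_abs)
    show "indep_vars (\<lambda>_. borel) (case_prod X) (I \<times> J)"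
      using indep_vars_subset[OF indep] \<open>I \<subseteq> U\<close> \<open>J \<subseteq> V\<close> by (simp add: case_prod_beta' Sigma_mono)
  next
    fix k
    assume "k \<in> I \<times> J"
    then obtain i j where "k = (i, j)" and "i \<in> U" and "j \<in> V"
      using \<open>I \<subseteq> U\<close> \<open>J \<subseteq> V\<close> by blast
    then show "AE x in M. \<bar>case_prod X k x\<bar> \<le> 1" and "expectation (case_prod X k) = 0"
      and "variance (case_prod X k) \<le> v"
      using bounded centered variance by simp_all
  qed (use \<open>finite I\<close> \<open>finite J\<close> \<open>l > 0\<close> in auto)
  ultimately show ?thesis
    by (simp add: card_cartesian_product)
qed

lemma prob_Ball_not_ge_union_bound:
  assumes "finite K"
    and "\<And>k. k \<in> K \<Longrightarrow> {x \<in> space M. Q k x} \<in> events"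
    and "\<And>k. k \<in> K \<Longrightarrow> prob {x \<in> space M. Q k x} \<le> b"
  shows "1 - real (card K) * b \<le> prob {x \<in> space M. \<forall>k\<in>K. \<not> Q k x}"
proof -
  let ?bad = "\<Union>k\<in>K. {x \<in> space M. Q k x}"
  have "?bad \<in> events"
    using assms(1,2) by auto
  have "prob ?bad \<le> (\<Sum>k\<in>K. prob {x \<in> space M. Q k x})"
    using assms(1,2) by (intro finite_measure_subadditive_finite) auto
  also have "\<dots> \<le> real (card K) * b"
    using sum_mono[of K _ "\<lambda>_. b"] assms(3) by simp
  finally have "1 - real (card K) * b \<le> prob (space M - ?bad)"
    using prob_compl[OF \<open>?bad \<in> events\<close>] by simp
  also have "space M - ?bad = {x \<in> space M. \<forall>k\<in>K. \<not> Q k x}"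
    by auto
  finally show ?thesis .
qed


lemma prob_all_block_sums_le:
  fixes X :: "'i \<Rightarrow> 'j \<Rightarrow> 'a \<Rightarrow> real"
  assumes indep: "indep_vars (\<lambda>_. borel) (\<lambda>(i, j). X i j) (U \<times> V)"
    and "finite U" and "finite V"
    and bounded: "\<And>i j. i \<in> U \<Longrightarrow> j \<in> V \<Longrightarrow> AE x in M. \<bar>X i j x\<bar> \<le> 1"
    and centered: "\<And>i j. i \<in> U \<Longrightarrow> j \<in> V \<Longrightarrow> expectation (X i j) = 0"
    and variance: "\<And>i j. i \<in> U \<Longrightarrow> j \<in> V \<Longrightarrow> variance (X i j) \<le> v"
    and "l > 0"
  shows "1 - real (card U choose p) * real (card V choose q)
               * (2 * exp (- l * t + real (p * q) * v * (exp l - 1 - l)))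
           \<le> prob {x \<in> space M. \<forall>I J. I \<subseteq> U \<and> J \<subseteq> V \<and> card I = p \<and> card J = q
                 \<longrightarrow> \<bar>\<Sum>i\<in>I. \<Sum>j\<in>J. X i j x\<bar> \<le> t}"
proof -
  define S where "S = (\<lambda>(I, J) x. \<Sum>i\<in>I. \<Sum>j\<in>J. X i j x)"
  define K where "K = {I. I \<subseteq> U \<and> card I = p} \<times> {J. J \<subseteq> V \<and> card J = q}"
  have "finite K"
    using \<open>finite U\<close> \<open>finite V\<close> by (auto simp: K_def intro: finite_subset)
  have block_event: "{x \<in> space M. t < \<bar>S IJ x\<bar>} \<in> events"
    and block_tail: "prob {x \<in> space M. t < \<bar>S IJ x\<bar>}
                       \<le> 2 * exp (- l * t + real (p * q) * v * (exp l - 1 - l))"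
    if IJ_in_K: "IJ \<in> K" for IJ
  proof -
    obtain I J where IJ_eq: "IJ = (I, J)" and IJ: "I \<subseteq> U" "J \<subseteq> V" "card I = p" "card J = q"
      using IJ_in_K by (auto simp: K_def)
    have S_IJ: "S IJ = (\<lambda>x. \<Sum>i\<in>I. \<Sum>j\<in>J. X i j x)"
      by (simp add: S_def IJ_eq)
    have [measurable]: "S IJ \<in> borel_measurable M"
      using indep IJ(1,2) unfolding S_IJ indep_vars_def by (fastforce intro!: borel_measurable_sum)
    show "{x \<in> space M. t < \<bar>S IJ x\<bar>} \<in> events"
      by measurable
    have "prob {x \<in> space M. t < \<bar>S IJ x\<bar>} \<le> prob {x \<in> space M. t \<le> \<bar>S IJ x\<bar>}"
      by (rule finite_measure_mono) (fastforce, measurable)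
    also have "\<dots> \<le> 2 * exp (- l * t + real (card I * card J) * v * (exp l - 1 - l))"
      unfolding S_IJ
      by (rule bennett_tail_abs_block_sum[OF indep IJ(1,2) finite_subset finite_subset])
         (use IJ(1,2) \<open>finite U\<close> \<open>finite V\<close> bounded centered variance \<open>l > 0\<close> in auto)
    finally show "prob {x \<in> space M. t < \<bar>S IJ x\<bar>}
                    \<le> 2 * exp (- l * t + real (p * q) * v * (exp l - 1 - l))"
      using IJ(3,4) by simp
  qed
  have "1 - real (card K) * (2 * exp (- l * t + real (p * q) * v * (exp l - 1 - l)))
          \<le> prob {x \<in> space M. \<forall>IJ\<in>K. \<not> t < \<bar>S IJ x\<bar>}"
    by (rule prob_Ball_not_ge_union_bound[OF \<open>finite K\<close> block_event block_tail])
  also have "{x \<in> space M. \<forall>IJ\<in>K. \<not> t < \<bar>S IJ x\<bar>}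
               = {x \<in> space M. \<forall>I J. I \<subseteq> U \<and> J \<subseteq> V \<and> card I = p \<and> card J = q
                   \<longrightarrow> \<bar>\<Sum>i\<in>I. \<Sum>j\<in>J. X i j x\<bar> \<le> t}"
    by (auto simp: K_def S_def not_less)
  finally show ?thesis
    using \<open>finite U\<close> \<open>finite V\<close> by (simp add: K_def card_cartesian_product n_subsets)
qed

end

lemma bennett_exponent_le:
  fixes n a b :: nat and \<sigma> :: real
  assumes "a > 0" and "b > 0"
    and "real a \<le> real n / 10^6" and "real b \<le> real n / 10^6"
    and "20 / sqrt (real n) \<le> \<sigma>"
  defines "L \<equiv> ln (real n / real a + real n / real b)"
    and "l \<equiv> 10 * ln (real n / real a + real n / real b) / (\<sigma> * sqrt (real n))"
  shows "- l * (real (a + b) * \<sigma> * sqrt (real n)) + real (a * b) * \<sigma>\<^sup>2 * (exp l - 1 - l)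
           \<le> (2/5 - 10 * L) * real (a + b)"
proof -
  define R where "R = real n / real a + real n / real b"
  define \<rho> where "\<rho> = \<sigma> * sqrt (real n)"
  define s where "s = real (a + b)"
  have "real n > 0"
    using assms(1,3) by (simp add: field_simps)
  have "\<rho> \<ge> 20"
    using assms(5) \<open>real n > 0\<close> by (simp add: \<rho>_def divide_le_eq)
  have "real n / real a \<ge> 10^6" and "real n / real b \<ge> 10^6"
    using assms(1-4) by (simp_all add: field_simps)
  then have "R \<ge> 10^6"
    by (simp add: R_def)
  have "L \<ge> 0"
    using \<open>R \<ge> 10^6\<close> by (simp add: L_def flip: R_def)
  have R_eq: "real (a * b) * R = real n * s"
    using assms(1,2) by (simp add: R_def s_def field_simps)
  have l_eq: "l = 10 * L / \<rho>"
    by (simp add: l_def L_def \<rho>_def)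
  then have "l * (s * \<rho>) = 10 * L * s"
    using \<open>\<rho> \<ge> 20\<close> by simp
  moreover have "real (a * b) * \<sigma>\<^sup>2 * (exp l - 1 - l) \<le> 2/5 * s"
  proof -
    have "l = L / 2 * (20 / \<rho>)"
      by (simp add: l_eq)
    then have "exp l - 1 - l \<le> (20 / \<rho>)\<^sup>2 * exp (L / 2)"
      using exp_mult_minus_linear_le[of "L / 2" "20 / \<rho>"] \<open>L \<ge> 0\<close> \<open>\<rho> \<ge> 20\<close> by simp
    also have "exp (L / 2) = sqrt R"
    proof -
      have "exp (L / 2) ^ 2 = R"
        using \<open>R \<ge> 10^6\<close> by (simp add: L_def R_def flip: exp_of_nat_mult)
      then show ?thesis
        by (intro real_sqrt_unique[symmetric]) auto
    qed
    finally have "real (a * b) * \<sigma>\<^sup>2 * (exp l - 1 - l) \<le> real (a * b) * \<sigma>\<^sup>2 * ((20 / \<rho>)\<^sup>2 * sqrt R)"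
      by (simp add: mult_left_mono)
    also have "\<dots> = 400 * s / sqrt R"
      using R_eq \<open>real n > 0\<close> \<open>R \<ge> 10^6\<close> \<open>\<rho> \<ge> 20\<close>
      by (auto simp: \<rho>_def power2_eq_square field_simps real_sqrt_mult_self simp flip: real_sqrt_mult)
    also have "\<dots> \<le> 400 * s / 1000"
    proof (intro divide_left_mono)
      show "1000 \<le> sqrt R"
        using real_sqrt_le_mono[OF \<open>R \<ge> 10^6\<close>] by (simp add: real_sqrt_power[symmetric] power_mult[symmetric])
    qed (use \<open>R \<ge> 10^6\<close> in \<open>auto simp: s_def\<close>)
    finally show ?thesis
      by simp
  qed
  ultimately show ?thesis
    by (simp add: s_def \<rho>_def algebra_simps)
qed

lemma binomial_mult_tail_bound_le:
  fixes n a b :: nat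
  assumes "a > 0" and "b > 0"
    and "real a \<le> real n / 10^6" and "real b \<le> real n / 10^6"
  defines "L \<equiv> ln (real n / real a + real n / real b)"
  shows "real (n choose a) * real (n choose b) * (2 * exp ((2/5 - 10 * L) * real (a + b)))
           \<le> exp (- 8 * real (a + b) * L)"
proof -
  define s where "s = real (a + b)"
  have "real n > 0"
    using assms(1,3) by (simp add: field_simps)
  have "real n / real a \<ge> 10^6" and "real n / real b \<ge> 10^6"
    using assms(1-4) by (simp_all add: field_simps)
  have "L \<ge> 3"
  proof -
    have "exp (3::real) = exp 1 ^ 3"
      by (simp flip: exp_of_nat_mult)
    also have "\<dots> \<le> 3 ^ 3"
      using e_less_272 by (intro power_mono) auto
    also have "\<dots> \<le> real n / real a + real n / real b"
      using \<open>real n / real a \<ge> 10^6\<close> \<open>real n / real b \<ge> 10^6\<close> by simp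
    finally show ?thesis
      using \<open>real n > 0\<close> assms(1,2) by (simp add: L_def ln_ge_iff add_pos_pos)
  qed
  have "real (n choose a) * real (n choose b) * (2 * exp ((2/5 - 10 * L) * s))
         \<le> exp (s * (1 + L)) * (2 * exp ((2/5 - 10 * L) * s))"
    using binomial_mult_binomial_le[OF assms(1,2)] \<open>real n > 0\<close>
    by (intro mult_right_mono) (auto simp: L_def s_def)
  also have "\<dots> = exp (s * (1 + L) + (2/5 - 10 * L) * s + ln 2)"
    by (simp add: exp_add)
  also have "\<dots> \<le> exp (- 8 * (L * s))"
  proof -
    have "ln (2::real) \<le> 1"
      using ln_le_minus_one[of 2] by simp
    moreover have "s \<ge> 1"
      using assms(1) by (simp add: s_def)
    moreover have "3 * s \<le> L * s"
      using \<open>L \<ge> 3\<close> \<open>s \<ge> 1\<close> by (intro mult_right_mono) auto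
    moreover have "s * (1 + L) + (2/5 - 10 * L) * s + ln 2 = 7/5 * s - 9 * (L * s) + ln 2"
      by (simp add: algebra_simps)
    ultimately have "s * (1 + L) + (2/5 - 10 * L) * s + ln 2 \<le> - 8 * (L * s)"
      by linarith
    then show ?thesis
      by simp
  qed
  finally show ?thesis
    by (simp add: s_def mult_ac)
qed

theorem mainTheorem6:
  fixes P :: "'a measure" and X :: "nat \<Rightarrow> nat \<Rightarrow> 'a \<Rightarrow> real"
    and n n1 n2 :: nat and \<sigma> :: real
  assumes "prob_space P"
    and "n1 > 0" and "n2 > 0" and "n > 0"
    and "real n1 \<le> real n / 10^6" and "real n2 \<le> real n / 10^6"
    and "\<sigma> \<ge> 20 / sqrt (real n)"
    and rv: "\<And>i j. i < n \<Longrightarrow> j < n \<Longrightarrow> X i j \<in> borel_measurable P"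
    and indep: "prob_space.indep_vars P (\<lambda>_. borel) (\<lambda>(i, j). X i j) ({0..<n} \<times> {0..<n})"
    and mean: "\<And>i j. i < n \<Longrightarrow> j < n \<Longrightarrow> prob_space.expectation P (X i j) = 0"
    and var: "\<And>i j. i < n \<Longrightarrow> j < n \<Longrightarrow> prob_space.variance P (X i j) \<le> \<sigma>\<^sup>2"
    and bdd: "\<And>i j. i < n \<Longrightarrow> j < n \<Longrightarrow> (AE \<omega> in P. \<bar>X i j \<omega>\<bar> \<le> 1)"
  shows "measure P {\<omega> \<in> space P. \<forall>I J. I \<subseteq> {0..<n} \<and> J \<subseteq> {0..<n} \<and> card I = n1 \<and> card J = n2
            \<longrightarrow> \<bar>\<Sum>i\<in>I. \<Sum>j\<in>J. X i j \<omega>\<bar> \<le> real (n1 + n2) * \<sigma> * sqrt (real n)}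
         \<ge> 1 - exp (- 8 * real (n1 + n2) * ln (real n / real n1 + real n / real n2))"
proof -
  interpret prob_space P by fact
  define L where "L = ln (real n / real n1 + real n / real n2)"
  define l where "l = 10 * L / (\<sigma> * sqrt (real n))"
  have "real n / real n1 > 1" and "real n / real n2 > 1"
    using assms(2,3,5,6) by (simp_all add: field_simps)
  then have "L > 0"
    by (simp add: L_def)
  have "0 < 20 / sqrt (real n)"
    using \<open>n > 0\<close> by simp
  then have "\<sigma> > 0"
    using assms(7) by linarith
  with \<open>L > 0\<close> have "l > 0"
    using \<open>n > 0\<close> by (simp add: l_def)
  have "1 - real (n choose n1) * real (n choose n2)
               * (2 * exp (- l * (real (n1 + n2) * \<sigma> * sqrt (real n)) + real (n1 * n2) * \<sigma>\<^sup>2 * (exp l - 1 - l)))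
          \<le> measure P {\<omega> \<in> space P. \<forall>I J. I \<subseteq> {0..<n} \<and> J \<subseteq> {0..<n} \<and> card I = n1 \<and> card J = n2
               \<longrightarrow> \<bar>\<Sum>i\<in>I. \<Sum>j\<in>J. X i j \<omega>\<bar> \<le> real (n1 + n2) * \<sigma> * sqrt (real n)}"
    using prob_all_block_sums_le[OF indep _ _ _ _ _ \<open>l > 0\<close>] bdd mean var by simp
  moreover have "real (n choose n1) * real (n choose n2)
                   * (2 * exp (- l * (real (n1 + n2) * \<sigma> * sqrt (real n)) + real (n1 * n2) * \<sigma>\<^sup>2 * (exp l - 1 - l)))
                 \<le> real (n choose n1) * real (n choose n2) * (2 * exp ((2/5 - 10 * L) * real (n1 + n2)))"
    using bennett_exponent_le[OF assms(2,3,5-7)] by (intro mult_left_mono) (simp_all add: l_def L_def)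
  moreover have "\<dots> \<le> exp (- 8 * real (n1 + n2) * L)"
    using binomial_mult_tail_bound_le[OF assms(2,3,5,6)] by (simp add: L_def)
  ultimately show ?thesis
    by (simp add: L_def)
qed

end
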